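(* Consider the regular partially labeled $k$-label broadcasting tree $\text{Tree}_k(\theta,d,\delta)$ (see context), and for $i\in[k]$ let $\mu^{(i)}_{\ell_{T_{\leq t}(\rho)}}$ be the distribution of the revealed labels $\ell_{T_{\leq t}(\rho)}$ conditionally on $\ell(\rho)=i$. Assume $\delta d>1$, $(1-\delta)\theta^2d<\frac14$, and $$2\delta d\log\Big(1+\theta^2\Big(\frac{1}{\theta+\frac{1-\theta}{k}}+\frac{1}{\frac{1-\theta}{k}}\Big)\Big)<[1-4(1-\delta)\theta^2d]^2.$$ Then for any $t>0$, $$\max_{i,j\in[k]}\log\Big(1+d_{\chi^2}\big(\mu^{(i)}_{\ell_{T_{\leq t}(\rho)}},\mu^{(j)}_{\ell_{T_{\leq t}(\rho)}}\big)\Big)\leq\frac{2\delta d\log\Big(1+\theta^2\Big(\frac{1}{\theta+\frac{1-\theta}{k}}+\frac{1}{\frac{1-\theta}{k}}\Big)\Big)}{1-4(1-\delta)\theta^2d}\leq k\cdot\frac{2\delta\theta^2d}{1-4(1-\delta)\theta^2d}\Big(\frac{1}{1-\theta}+\frac{1}{k\theta+1-\theta}\Big).$$ Furthermore, $$\inf_\Phi\sup_{\ell(\rho)\in[k]}\mathbb{P}\big(\Phi(\ell_{T_{\leq t}(\rho)})\neq\ell(\rho)\big)\geq\frac12\Big(1-\frac{2\delta\theta^2d}{1-4(1-\delta)\theta^2d}\Big(\frac{1}{1-\theta}+\frac{1}{k\theta+1-\theta}\Big)-\frac1k\Big),$$ where the infimum is over all estimators $\Phi$ mapping the revealed labels to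 $[k]$.
   Context: $\text{Tree}_k(\theta,d,\delta)$ (regular version): every vertex has $d$ children, exactly $\delta d$ with revealed labels and $(1-\delta)d$ unlabeled; labels in $[k]=\{1,\dots,k\}$; the root label is unrevealed; each child independently copies its parent's label with probability $\theta+\frac{1-\theta}{k}$ and takes each of the other $k-1$ labels with probability $\frac{1-\theta}{k}$, $0<\theta<1$. $\ell_{T_{\leq t}(\rho)}$ is the collection of revealed labels at depth $\leq t$. $d_{\chi^2}(\mu,\nu)=\int\frac{\mu^2}{\nu}-1$ is the $\chi^2$ divergence. *)

theory Defs
  imports "HOL-Analysis.Analysis"
begin

text \<open>Vertices of the d-ary tree truncated at depth t: words over {0..<d} of length at most t.
  The root is the empty word; the parent of a non-root vertex v is butlast v.\<close>
definition tree_verts :: "nat \<Rightarrow> nat \<Rightarrow> nat list set" where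
  "tree_verts d t = {vs. length vs \<le> t \<and> set vs \<subseteq> {..<d}}"

text \<open>Revealed vertices: among the d children of every vertex, the first r
  (r = delta d) have revealed labels; the root is unrevealed.\<close>
definition revealed_verts :: "nat \<Rightarrow> nat \<Rightarrow> nat \<Rightarrow> nat list set" where
  "revealed_verts r d t = {vs \<in> tree_verts d t. vs \<noteq> [] \<and> last vs < r}"

definition trans_prob :: "nat \<Rightarrow> real \<Rightarrow> nat \<Rightarrow> nat \<Rightarrow> real" where
  "trans_prob k \<theta> a b = (if a = b then \<theta> + (1 - \<theta>) / real k else (1 - \<theta>) / real k)"

definition full_configs :: "nat \<Rightarrow> nat \<Rightarrow> nat \<Rightarrow> (nat list \<Rightarrow> nat) set" where
  "full_configs k d t = PiE (tree_verts d t) (\<lambda>_. {1..k})"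

definition rev_configs :: "nat \<Rightarrow> nat \<Rightarrow> nat \<Rightarrow> nat \<Rightarrow> (nat list \<Rightarrow> nat) set" where
  "rev_configs k r d t = PiE (revealed_verts r d t) (\<lambda>_. {1..k})"

definition mu :: "nat \<Rightarrow> real \<Rightarrow> nat \<Rightarrow> nat \<Rightarrow> nat \<Rightarrow> nat \<Rightarrow> (nat list \<Rightarrow> nat) \<Rightarrow> real" where
  "mu k \<theta> r d t i x =
     (\<Sum>\<sigma> \<in> {\<sigma> \<in> full_configs k d t. \<sigma> [] = i \<and> restrict \<sigma> (revealed_verts r d t) = x}.
        \<Prod>v \<in> tree_verts d t - {[]}. trans_prob k \<theta> (\<sigma> (butlast v)) (\<sigma> v))"

definition chi2 :: "'a set \<Rightarrow> ('a \<Rightarrow> real) \<Rightarrow> ('a \<Rightarrow> real) \<Rightarrow> real" where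
  "chi2 S \<mu> \<nu> = (\<Sum>x\<in>S. (\<mu> x)^2 / \<nu> x) - 1"

definition err_prob :: "nat \<Rightarrow> real \<Rightarrow> nat \<Rightarrow> nat \<Rightarrow> nat \<Rightarrow> ((nat list \<Rightarrow> nat) \<Rightarrow> nat) \<Rightarrow> nat \<Rightarrow> real" where
  "err_prob k \<theta> r d t \<Phi> i = (\<Sum>x \<in> rev_configs k r d t. if \<Phi> x \<noteq> i then mu k \<theta> r d t i x else 0)"

end

theory Submission
  imports Defs
begin

text \<open>Given the root label, the revealed labels in the \<open>d\<close> subtrees below the root are
  independent, so \<open>1 + \<chi>\<^sup>2\<close> tensorises: at depth \<open>t + 1\<close> it is the product over the children
  of \<open>1 + \<chi>\<^sup>2\<close> of the laws seen through each child. A revealed child contributes at most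
  \<open>1 + X\<close>, where \<open>X\<close> is the \<open>\<chi>\<^sup>2\<close> distance between two rows of the transition matrix. Through an
  unrevealed child one sees a mixture of depth-\<open>t\<close> laws whose rows differ by a factor \<open>\<theta>\<close>,
  and convexity bounds its \<open>\<chi>\<^sup>2\<close> by \<open>4 \<theta>\<^sup>2 C\<close> if \<open>C\<close> bounds all \<open>\<chi>\<^sup>2\<close> distances at depth \<open>t\<close>.
  Hence \<open>1 + C' \<le> (1 + X)\<^bsup>\<delta>d\<^esup> (1 + 4\<theta>\<^sup>2C)\<^bsup>(1-\<delta>)d\<^esup>\<close>, and the hypotheses make
  \<open>B = 2\<delta>d ln(1 + X) / (1 - 4(1-\<delta>)\<theta>\<^sup>2d)\<close> an invariant bound, so \<open>C \<le> B\<close> at every depth.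
  For the estimation error, \<open>\<Sum>\<^sub>x max\<^sub>i \<mu>\<^sub>i(x) \<le> (k + 1 + B)/2\<close> follows from AM-GM against a
  reference law \<open>\<mu>\<^sub>1\<close>.\<close>

lemma sum_PiE_insert:
  assumes "a \<notin> S"
  shows "(\<Sum>\<sigma>\<in>PiE (insert a S) (\<lambda>_. A). g \<sigma>) = (\<Sum>b\<in>A. \<Sum>\<tau>\<in>PiE S (\<lambda>_. A). g (\<tau>(a := b)))"
proof -
  have inj: "inj_on (\<lambda>(y, g). g(a := y)) (A \<times> PiE S (\<lambda>_. A))"
  proof (rule inj_onI, clarify)
    fix y1 g1 y2 g2
    assume h: "g1 \<in> PiE S (\<lambda>_. A)" "g2 \<in> PiE S (\<lambda>_. A)" "g1(a := y1) = g2(a := y2)"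
    then have "y1 = y2" by (metis fun_upd_same)
    moreover have "g1 = g2"
    proof
      fix v show "g1 v = g2 v"
        using h assms by (cases "v = a") (auto simp: PiE_def extensional_def dest: fun_cong[of _ _ v])
    qed
    ultimately show "y1 = y2 \<and> g1 = g2" by simp
  qed
  have "(\<Sum>\<sigma>\<in>PiE (insert a S) (\<lambda>_. A). g \<sigma>)
      = (\<Sum>p\<in>A \<times> PiE S (\<lambda>_. A). g ((\<lambda>(y, g). g(a := y)) p))"
    unfolding PiE_insert_eq by (rule sum.reindex[OF inj, unfolded comp_def])
  also have "\<dots> = (\<Sum>b\<in>A. \<Sum>\<tau>\<in>PiE S (\<lambda>_. A). g (\<tau>(a := b)))"
    by (simp add: sum.cartesian_product case_prod_unfold)
  finally show ?thesis .
qed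

lemma sum_PiE_insert_restrict:
  assumes "a \<notin> S"
  shows "(\<Sum>z\<in>PiE (insert a S) (\<lambda>_. A). g (z a) (restrict z S)) = (\<Sum>b\<in>A. \<Sum>\<tau>\<in>PiE S (\<lambda>_. A). g b \<tau>)"
proof -
  have "restrict (\<tau>(a := b)) S = \<tau>" if "\<tau> \<in> PiE S (\<lambda>_. A)" for b \<tau>
    using that assms by (auto simp: restrict_def fun_eq_iff PiE_def extensional_def)
  then show ?thesis
    by (simp add: sum_PiE_insert[OF assms])
qed

lemma bij_betw_PiE_subtrees:
  fixes T :: "'i \<Rightarrow> 'i list set" and A :: "'b set"
  shows "bij_betw (\<lambda>\<tau>. \<lambda>c\<in>I. \<lambda>w\<in>T c. \<tau> (c # w))
     (PiE (\<Union>c\<in>I. (#) c ` T c) (\<lambda>_. A)) (PiE I (\<lambda>c. PiE (T c) (\<lambda>_. A)))"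
proof -
  define U where "U = (\<Union>c\<in>I. (#) c ` T c)"
  define join :: "('i \<Rightarrow> 'i list \<Rightarrow> 'b) \<Rightarrow> 'i list \<Rightarrow> 'b"
    where "join Y v = (if v \<in> U then Y (hd v) (tl v) else undefined)" for Y v
  show ?thesis
    unfolding U_def[symmetric]
  proof (rule bij_betw_byWitness[where f' = join])
    show "\<forall>\<tau>\<in>PiE U (\<lambda>_. A). join (\<lambda>c\<in>I. \<lambda>w\<in>T c. \<tau> (c # w)) = \<tau>"
    proof (intro ballI ext)
      fix \<tau> v assume \<tau>: "\<tau> \<in> PiE U (\<lambda>_. A)"
      show "join (\<lambda>c\<in>I. \<lambda>w\<in>T c. \<tau> (c # w)) v = \<tau> v"
      proof (cases "v \<in> U")
        case True
        then obtain c w where "c \<in> I" "w \<in> T c" "v = c # w" unfolding U_def by auto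
        with True show ?thesis by (simp add: join_def)
      next
        case False with \<tau> show ?thesis by (auto simp: join_def PiE_def extensional_def)
      qed
    qed
    show "\<forall>Y\<in>PiE I (\<lambda>c. PiE (T c) (\<lambda>_. A)). (\<lambda>c\<in>I. \<lambda>w\<in>T c. join Y (c # w)) = Y"
    proof (intro ballI ext)
      fix Y c w assume Y: "Y \<in> PiE I (\<lambda>c. PiE (T c) (\<lambda>_. A))"
      show "(\<lambda>c\<in>I. \<lambda>w\<in>T c. join Y (c # w)) c w = Y c w"
      proof (cases "c \<in> I \<and> w \<in> T c")
        case True then show ?thesis by (auto simp: join_def U_def)
      next
        case False with Y show ?thesis by (cases "c \<in> I") (auto simp: PiE_iff extensional_def)
      qed
    qed
    show "(\<lambda>\<tau>. \<lambda>c\<in>I. \<lambda>w\<in>T c. \<tau> (c # w)) ` PiE U (\<lambda>_. A) \<subseteq> PiE I (\<lambda>c. PiE (T c) (\<lambda>_. A))"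
      by (auto simp: U_def PiE_def Pi_def) blast
    show "join ` PiE I (\<lambda>c. PiE (T c) (\<lambda>_. A)) \<subseteq> PiE U (\<lambda>_. A)"
      by (auto simp: join_def U_def PiE_def Pi_def extensional_def) blast
  qed
qed

lemma sum_prod_PiE_subtrees:
  fixes f :: "'i \<Rightarrow> ('i list \<Rightarrow> 'b) \<Rightarrow> 'c::comm_semiring_1"
  assumes I: "finite I" and T: "\<And>c. c \<in> I \<Longrightarrow> finite (T c)" and A: "finite A"
  shows "(\<Sum>\<tau>\<in>PiE (\<Union>c\<in>I. (#) c ` T c) (\<lambda>_. A). \<Prod>c\<in>I. f c (\<lambda>w\<in>T c. \<tau> (c # w)))
       = (\<Prod>c\<in>I. \<Sum>y\<in>PiE (T c) (\<lambda>_. A). f c y)"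
proof -
  have "(\<Prod>c\<in>I. \<Sum>y\<in>PiE (T c) (\<lambda>_. A). f c y)
      = (\<Sum>Y\<in>PiE I (\<lambda>c. PiE (T c) (\<lambda>_. A)). \<Prod>c\<in>I. f c (Y c))"
    using I T A by (intro prod_sum_PiE) (auto intro: finite_PiE)
  also have "\<dots> = (\<Sum>\<tau>\<in>PiE (\<Union>c\<in>I. (#) c ` T c) (\<lambda>_. A). \<Prod>c\<in>I. f c ((\<lambda>c\<in>I. \<lambda>w\<in>T c. \<tau> (c # w)) c))"
    by (rule sum.reindex_bij_betw[OF bij_betw_PiE_subtrees, symmetric])
  also have "\<dots> = (\<Sum>\<tau>\<in>PiE (\<Union>c\<in>I. (#) c ` T c) (\<lambda>_. A). \<Prod>c\<in>I. f c (\<lambda>w\<in>T c. \<tau> (c # w)))"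
    by (intro sum.cong prod.cong) auto
  finally show ?thesis by simp
qed

lemma prod_lessThan_if_less:
  fixes a b :: "'a::comm_monoid_mult"
  assumes "r \<le> d"
  shows "(\<Prod>c\<in>{..<d}. if c < r then a else b) = a ^ r * b ^ (d - r)"
proof -
  have "(\<Prod>c\<in>{..<d}. if c < r then a else b)
      = (\<Prod>c\<in>{..<d} \<inter> {c. c < r}. a) * (\<Prod>c\<in>{..<d} \<inter> - {c. c < r}. b)"
    by (rule prod.If_cases) simp
  also have "{..<d} \<inter> {c. c < r} = {..<r}" using assms by auto
  also have "{..<d} \<inter> - {c. c < r} = {r..<d}" by auto
  finally show ?thesis by simp
qed

lemma chi2_eq_sum_sq_diff:
  fixes p q :: "'a \<Rightarrow> real"
  assumes q: "\<And>x. x \<in> S \<Longrightarrow> q x \<noteq> 0" and p1: "sum p S = 1" and q1: "sum q S = 1"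
  shows "chi2 S p q = (\<Sum>x\<in>S. (p x - q x)^2 / q x)"
proof -
  have "(\<Sum>x\<in>S. (p x - q x)^2 / q x) = (\<Sum>x\<in>S. (p x)^2 / q x - 2 * p x + q x)"
    using q by (intro sum.cong refl) (simp add: field_simps power2_eq_square)
  also have "\<dots> = (\<Sum>x\<in>S. (p x)^2 / q x) - 2 * sum p S + sum q S"
    by (simp add: sum.distrib sum_subtractf sum_distrib_left)
  finally show ?thesis using p1 q1 by (simp add: chi2_def)
qed

lemma chi2_nonneg:
  fixes p q :: "'a \<Rightarrow> real"
  assumes q: "\<And>x. x \<in> S \<Longrightarrow> 0 < q x" and "sum p S = 1" "sum q S = 1"
  shows "0 \<le> chi2 S p q"
proof -
  have "chi2 S p q = (\<Sum>x\<in>S. (p x - q x)^2 / q x)"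
    using assms by (intro chi2_eq_sum_sq_diff) (auto simp: less_imp_neq[symmetric])
  also have "\<dots> \<ge> 0"
    using q by (intro sum_nonneg divide_nonneg_pos) auto
  finally show ?thesis .
qed

lemma inverse_mixture_le:
  fixes w y :: "'b \<Rightarrow> real"
  assumes "finite B" "B \<noteq> {}" "sum w B = 1" "\<And>b. b \<in> B \<Longrightarrow> 0 \<le> w b" "\<And>b. b \<in> B \<Longrightarrow> 0 < y b"
  shows "1 / (\<Sum>b\<in>B. w b * y b) \<le> (\<Sum>b\<in>B. w b / y b)"
proof -
  have "inverse (\<Sum>b\<in>B. w b *\<^sub>R y b) \<le> (\<Sum>b\<in>B. w b * inverse (y b))"
    by (rule convex_on_sum[OF assms(1,2) convex_on_inverse[of "{0<..}"] assms(3,4)])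
       (use assms(5) in auto)
  then show ?thesis by (simp add: divide_inverse)
qed

text \<open>Pointwise: Jensen for \<open>1/x\<close> moves the mixture out of the denominator, then
  \<open>(u - v)\<^sup>2 \<le> 2 (u - w)\<^sup>2 + 2 (v - w)\<^sup>2\<close> with \<open>w = m b z\<close>.\<close>
lemma sum_sq_diff_div_mixture_le:
  fixes m :: "'b \<Rightarrow> 'a \<Rightarrow> real" and w :: "'b \<Rightarrow> real"
  assumes B: "finite B" "B \<noteq> {}" and w: "sum w B = 1" "\<And>b. b \<in> B \<Longrightarrow> 0 \<le> w b"
    and pos: "\<And>b z. b \<in> B \<Longrightarrow> z \<in> S \<Longrightarrow> 0 < m b z"
    and sum1: "\<And>b. b \<in> B \<Longrightarrow> sum (m b) S = 1"
    and i: "i \<in> B" and j: "j \<in> B"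
  shows "(\<Sum>z\<in>S. (m i z - m j z)^2 / (\<Sum>b\<in>B. w b * m b z))
           \<le> 2 * (\<Sum>b\<in>B. w b * (chi2 S (m i) (m b) + chi2 S (m j) (m b)))"
proof -
  have pointwise: "(m i z - m j z)^2 / (\<Sum>b\<in>B. w b * m b z)
      \<le> 2 * (\<Sum>b\<in>B. w b * ((m i z - m b z)^2 / m b z + (m j z - m b z)^2 / m b z))"
    if z: "z \<in> S" for z
  proof -
    have "(m i z - m j z)^2 * (1 / (\<Sum>b\<in>B. w b * m b z))
        \<le> (m i z - m j z)^2 * (\<Sum>b\<in>B. w b / m b z)"
      using inverse_mixture_le[OF B w] pos z by (intro mult_left_mono) auto
    also have "\<dots> = (\<Sum>b\<in>B. w b * ((m i z - m j z)^2 / m b z))"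
      unfolding sum_distrib_left by (intro sum.cong refl) (simp add: ac_simps)
    also have "\<dots> \<le> (\<Sum>b\<in>B. w b * (2 * ((m i z - m b z)^2 / m b z + (m j z - m b z)^2 / m b z)))"
    proof (intro sum_mono mult_left_mono)
      fix b assume b: "b \<in> B"
      have "(m i z - m j z)^2 \<le> 2 * (m i z - m b z)^2 + 2 * (m j z - m b z)^2"
        using zero_le_power2[of "m i z + m j z - 2 * m b z"]
        by (simp add: power2_eq_square algebra_simps)
      then show "(m i z - m j z)^2 / m b z \<le> 2 * ((m i z - m b z)^2 / m b z + (m j z - m b z)^2 / m b z)"
        using pos[OF b z] by (simp add: field_simps)
    qed (use w in auto)
    finally show ?thesis by (simp add: sum_distrib_left ac_simps)
  qed
  have "(\<Sum>z\<in>S. (m i z - m j z)^2 / (\<Sum>b\<in>B. w b * m b z))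
      \<le> (\<Sum>z\<in>S. 2 * (\<Sum>b\<in>B. w b * ((m i z - m b z)^2 / m b z + (m j z - m b z)^2 / m b z)))"
    by (rule sum_mono) (rule pointwise)
  also have "\<dots> = 2 * (\<Sum>z\<in>S. \<Sum>b\<in>B. w b * ((m i z - m b z)^2 / m b z + (m j z - m b z)^2 / m b z))"
    by (simp add: sum_distrib_left)
  also have "\<dots> = 2 * (\<Sum>b\<in>B. w b * (chi2 S (m i) (m b) + chi2 S (m j) (m b)))"
  proof -
    have chi2_eq: "chi2 S (m a) (m b) = (\<Sum>z\<in>S. (m a z - m b z)^2 / m b z)"
      if "a \<in> B" "b \<in> B" for a b
      using that pos sum1 by (intro chi2_eq_sum_sq_diff) (auto simp: less_imp_neq[symmetric])
    show ?thesis
      unfolding sum_distrib_left[of 2] by (subst sum.swap, intro sum.cong refl)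
        (simp add: chi2_eq i j sum.distrib sum_distrib_left distrib_left)
  qed
  finally show ?thesis .
qed

lemma ln_add_one_ge_self_minus_half_sq:
  fixes u :: real
  assumes u: "0 \<le> u"
  shows "u - u^2 / 2 \<le> ln (1 + u)"
proof -
  have "(\<lambda>x. x - x^2 / 2 - ln (1 + x)) u \<le> (\<lambda>x. x - x^2 / 2 - ln (1 + x)) 0"
  proof (rule deriv_nonpos_imp_antimono[where g = "\<lambda>x. x - x^2 / 2 - ln (1 + x)"
        and g' = "\<lambda>x. 1 - x - 1 / (1 + x)"])
    fix x :: real assume x: "x \<in> {0..u}"
    show "((\<lambda>x. x - x^2 / 2 - ln (1 + x)) has_real_derivative (1 - x - 1 / (1 + x))) (at x)"
      using x by (intro derivative_eq_intros refl) (auto simp: power2_eq_square)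
    have "(1 - x) * (1 + x) \<le> 1" by (simp add: algebra_simps)
    with x show "1 - x - 1 / (1 + x) \<le> 0" by (simp add: field_simps)
  qed (use u in auto)
  then show ?thesis by simp
qed

text \<open>With \<open>r ln(1 + X) = DB/2\<close> and \<open>n e = 1 - D\<close>, the map \<open>C \<mapsto> (1 + X)\<^sup>r (1 + e C)\<^sup>n - 1\<close>
  sends \<open>B\<close> below \<open>B\<close>: the left side is at most \<open>exp (B - DB/2) \<le> exp (B - B\<^sup>2/2) \<le> 1 + B\<close>.\<close>
lemma power_mult_power_le_fixed_point:
  fixes X B D e :: real and r n :: nat
  assumes X: "0 \<le> X" and B: "0 \<le> B" "B \<le> D" and e: "0 \<le> e"
    and r: "real r * ln (1 + X) = D * B / 2" and n: "real n * e = 1 - D"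
  shows "(1 + X)^r * (1 + e * B)^n \<le> 1 + B"
proof -
  have "(1 + X)^r = exp (D * B / 2)"
    using X by (simp add: r[symmetric] exp_of_nat_mult)
  moreover have "(1 + e * B)^n \<le> exp ((1 - D) * B)"
  proof -
    have "(1 + e * B)^n \<le> exp (e * B)^n"
      using e B by (intro power_mono) auto
    also have "\<dots> = exp ((1 - D) * B)"
      by (simp add: n[symmetric] exp_of_nat_mult[symmetric] mult.assoc)
    finally show ?thesis .
  qed
  ultimately have "(1 + X)^r * (1 + e * B)^n \<le> exp (D * B / 2) * exp ((1 - D) * B)"
    by (simp add: mult_left_mono)
  also have "\<dots> = exp (B - D * B / 2)" by (simp add: exp_add[symmetric] algebra_simps)
  also have "\<dots> \<le> exp (B - B^2 / 2)"
    using B mult_right_mono[OF B(2) B(1)] by (simp add: power2_eq_square)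
  also have "\<dots> \<le> 1 + B"
    using ln_add_one_ge_self_minus_half_sq[OF B(1)] B(1) by (simp add: ln_ge_iff)
  finally show ?thesis .
qed

text \<open>Pointwise AM-GM \<open>a \<le> a\<^sup>2 / (2 L v) + L v / 2\<close> for \<open>a = \<mu> (\<Phi> x) x\<close>, \<open>v = \<mu> i0 x\<close> and
  \<open>L = (card I + 1 + B) / 2\<close>, summed over \<open>x\<close>.\<close>
lemma sum_estimator_le:
  fixes \<mu> :: "'i \<Rightarrow> 'a \<Rightarrow> real" and \<Phi> :: "'a \<Rightarrow> 'i"
  assumes I: "finite I" and i0: "i0 \<in> I" and \<Phi>: "\<And>x. x \<in> S \<Longrightarrow> \<Phi> x \<in> I"
    and pos: "\<And>x. x \<in> S \<Longrightarrow> 0 < \<mu> i0 x" and sum1: "sum (\<mu> i0) S = 1"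
    and chi2: "\<And>i. i \<in> I \<Longrightarrow> chi2 S (\<mu> i) (\<mu> i0) \<le> B" and B: "0 \<le> B"
  shows "(\<Sum>x\<in>S. \<mu> (\<Phi> x) x) \<le> (real (card I) + 1 + B) / 2"
proof -
  define L where "L = (real (card I) + 1 + B) / 2"
  have L: "0 < L" using B by (simp add: L_def)
  have pointwise: "\<mu> (\<Phi> x) x \<le> (\<Sum>i\<in>I. (\<mu> i x)^2 / \<mu> i0 x) / (2 * L) + L * \<mu> i0 x / 2"
    if x: "x \<in> S" for x
  proof -
    let ?a = "\<mu> (\<Phi> x) x" and ?v = "\<mu> i0 x"
    have "2 * ?a * (L * ?v) \<le> ?a^2 + (L * ?v)^2"
      using zero_le_power2[of "?a - L * ?v"] by (simp add: power2_eq_square algebra_simps)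
    then have "?a \<le> ?a^2 / ?v / (2 * L) + L * ?v / 2"
      using pos[OF x] L by (simp add: field_simps power2_eq_square)
    also have "?a^2 \<le> (\<Sum>i\<in>I. (\<mu> i x)^2)"
      using I \<Phi>[OF x] by (intro member_le_sum) auto
    then have "?a^2 / ?v / (2 * L) \<le> (\<Sum>i\<in>I. (\<mu> i x)^2 / ?v) / (2 * L)"
      using pos[OF x] L by (simp add: divide_right_mono sum_divide_distrib[symmetric])
    finally show ?thesis by simp
  qed
  have "(\<Sum>x\<in>S. \<mu> (\<Phi> x) x) \<le> (\<Sum>x\<in>S. (\<Sum>i\<in>I. (\<mu> i x)^2 / \<mu> i0 x) / (2 * L) + L * \<mu> i0 x / 2)"
    by (rule sum_mono) (rule pointwise)
  also have "\<dots> = (\<Sum>x\<in>S. \<Sum>i\<in>I. (\<mu> i x)^2 / \<mu> i0 x) / (2 * L) + L * sum (\<mu> i0) S / 2"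
    by (simp add: sum.distrib sum_divide_distrib sum_distrib_left)
  also have "\<dots> = (\<Sum>i\<in>I. 1 + chi2 S (\<mu> i) (\<mu> i0)) / (2 * L) + L / 2"
    by (subst sum.swap) (simp add: sum1 chi2_def)
  also have "\<dots> \<le> (real (card I) * (1 + B)) / (2 * L) + L / 2"
    using chi2 L sum_mono[of I "\<lambda>i. 1 + chi2 S (\<mu> i) (\<mu> i0)" "\<lambda>_. 1 + B"]
    by (simp add: divide_right_mono)
  also have "\<dots> \<le> L"
  proof -
    have "L^2 - real (card I) * (1 + B) = (real (card I) - 1 - B)^2 / 4"
      by (simp add: L_def power2_eq_square field_simps)
    then have "real (card I) * (1 + B) \<le> L^2"
      by (smt (verit) zero_le_power2 divide_nonneg_pos)
    with L show ?thesis by (simp add: field_simps power2_eq_square)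
  qed
  finally show ?thesis by (simp add: L_def)
qed

lemma tree_verts_0: "tree_verts d 0 = {[]}"
  by (auto simp: tree_verts_def)

lemma tree_verts_Suc: "tree_verts d (Suc t) = insert [] (\<Union>c\<in>{..<d}. (#) c ` tree_verts d t)"
proof (rule set_eqI)
  fix v show "v \<in> tree_verts d (Suc t) \<longleftrightarrow> v \<in> insert [] (\<Union>c\<in>{..<d}. (#) c ` tree_verts d t)"
    by (cases v) (auto simp: tree_verts_def)
qed

lemma finite_tree_verts: "finite (tree_verts d t)"
proof -
  have "tree_verts d t = {xs. set xs \<subseteq> {..<d} \<and> length xs \<le> t}"
    by (auto simp: tree_verts_def)
  then show ?thesis using finite_lists_length_le[of "{..<d}" t] by simp
qed

lemma Nil_in_tree_verts: "[] \<in> tree_verts d t"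
  by (simp add: tree_verts_def)

lemma butlast_in_tree_verts: "w \<in> tree_verts d t \<Longrightarrow> butlast w \<in> tree_verts d t"
  by (auto simp: tree_verts_def dest: in_set_butlastD)

lemma revealed_verts_0: "revealed_verts r d 0 = {}"
  by (auto simp: revealed_verts_def tree_verts_def)

lemma Nil_notin_revealed_verts: "[] \<notin> revealed_verts r d t"
  by (simp add: revealed_verts_def)

lemma revealed_verts_subset: "revealed_verts r d t \<subseteq> tree_verts d t"
  by (auto simp: revealed_verts_def)

lemma finite_revealed_verts: "finite (revealed_verts r d t)"
  using finite_tree_verts revealed_verts_subset by (rule finite_subset[rotated])

text \<open>The revealed vertices of the depth-\<open>t\<close> subtree below the child \<open>c\<close> of the root, addressed
  relative to that child: the child itself (the word \<open>[]\<close>) is revealed iff \<open>c < r\<close>.\<close>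
definition subtree_revealed :: "nat \<Rightarrow> nat \<Rightarrow> nat \<Rightarrow> nat \<Rightarrow> nat list set" where
  "subtree_revealed r d t c =
     (if c < r then insert [] (revealed_verts r d t) else revealed_verts r d t)"

lemma subtree_revealed_subset: "subtree_revealed r d t c \<subseteq> tree_verts d t"
  using revealed_verts_subset Nil_in_tree_verts by (auto simp: subtree_revealed_def)

lemma finite_subtree_revealed: "finite (subtree_revealed r d t c)"
  by (simp add: subtree_revealed_def finite_revealed_verts)

lemma Cons_in_revealed_verts_Suc:
  "c # w \<in> revealed_verts r d (Suc t) \<longleftrightarrow> c < d \<and> w \<in> subtree_revealed r d t c"
  by (cases w) (auto simp: revealed_verts_def tree_verts_def subtree_revealed_def)

lemma revealed_verts_Suc:
  "revealed_verts r d (Suc t) = (\<Union>c\<in>{..<d}. (#) c ` subtree_revealed r d t c)"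
proof (rule set_eqI)
  fix v show "v \<in> revealed_verts r d (Suc t) \<longleftrightarrow> v \<in> (\<Union>c\<in>{..<d}. (#) c ` subtree_revealed r d t c)"
    using Nil_notin_revealed_verts Cons_in_revealed_verts_Suc by (cases v) auto
qed

lemma rev_configs_0: "rev_configs k r d 0 = {\<lambda>_. undefined}"
  by (simp add: rev_configs_def revealed_verts_0)

lemma rev_configs_Suc:
  "rev_configs k r d (Suc t) = PiE (\<Union>c\<in>{..<d}. (#) c ` subtree_revealed r d t c) (\<lambda>_. {1..k})"
  by (simp add: rev_configs_def revealed_verts_Suc)

lemma restrict_subtree_in_PiE:
  assumes "x \<in> rev_configs k r d (Suc t)" "c < d"
  shows "(\<lambda>w\<in>subtree_revealed r d t c. x (c # w)) \<in> PiE (subtree_revealed r d t c) (\<lambda>_. {1..k})"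
  using assms Cons_in_revealed_verts_Suc[of c _ r d t] by (auto simp: rev_configs_def PiE_iff)

lemma restrict_revealed_Suc_iff:
  assumes x: "x \<in> rev_configs k r d (Suc t)"
  shows "restrict (\<tau>([] := i)) (revealed_verts r d (Suc t)) = x \<longleftrightarrow>
     (\<forall>c<d. restrict (\<lambda>w\<in>tree_verts d t. \<tau> (c # w)) (subtree_revealed r d t c)
             = (\<lambda>w\<in>subtree_revealed r d t c. x (c # w)))"
    (is "?lhs \<longleftrightarrow> (\<forall>c<d. ?sub c)")
proof
  assume h: ?lhs
  show "\<forall>c<d. ?sub c"
  proof (intro allI impI ext)
    fix c w assume c: "c < d"
    show "restrict (\<lambda>w\<in>tree_verts d t. \<tau> (c # w)) (subtree_revealed r d t c) w
        = (\<lambda>w\<in>subtree_revealed r d t c. x (c # w)) w"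
    proof (cases "w \<in> subtree_revealed r d t c")
      case True
      with c have "c # w \<in> revealed_verts r d (Suc t)" by (simp add: Cons_in_revealed_verts_Suc)
      with h True subtree_revealed_subset[of r d t c] show ?thesis by auto
    qed simp
  qed
next
  assume h: "\<forall>c<d. ?sub c"
  show ?lhs
  proof
    fix v show "restrict (\<tau>([] := i)) (revealed_verts r d (Suc t)) v = x v"
    proof (cases "v \<in> revealed_verts r d (Suc t)")
      case True
      then obtain c w where v: "v = c # w" "c < d" "w \<in> subtree_revealed r d t c"
        using Nil_notin_revealed_verts Cons_in_revealed_verts_Suc by (cases v) auto
      with h have "restrict (\<lambda>w\<in>tree_verts d t. \<tau> (c # w)) (subtree_revealed r d t c) w
                 = (\<lambda>w\<in>subtree_revealed r d t c. x (c # w)) w" by simp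
      with v True subtree_revealed_subset[of r d t c] show ?thesis by auto
    next
      case False with x show ?thesis by (auto simp: rev_configs_def PiE_def extensional_def)
    qed
  qed
qed

definition config_weight :: "nat \<Rightarrow> real \<Rightarrow> nat \<Rightarrow> nat \<Rightarrow> (nat list \<Rightarrow> nat) \<Rightarrow> real" where
  "config_weight k \<theta> d t y = (\<Prod>v \<in> tree_verts d t - {[]}. trans_prob k \<theta> (y (butlast v)) (y v))"

lemma mu_eq_sum_config_weight:
  "mu k \<theta> r d t b z = (\<Sum>y\<in>PiE (tree_verts d t) (\<lambda>_. {1..k}).
     if y [] = b \<and> restrict y (revealed_verts r d t) = z then config_weight k \<theta> d t y else 0)"
  unfolding mu_def full_configs_def config_weight_def
  by (rule sum.inter_filter) (auto intro: finite_PiE finite_tree_verts)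

lemma config_weight_Suc:
  "config_weight k \<theta> d (Suc t) (\<tau>([] := i)) =
     (\<Prod>c<d. trans_prob k \<theta> i (\<tau> [c]) * config_weight k \<theta> d t (\<lambda>w\<in>tree_verts d t. \<tau> (c # w)))"
proof -
  let ?V = "tree_verts d t"
  let ?g = "\<lambda>v. trans_prob k \<theta> ((\<tau>([] := i)) (butlast v)) ((\<tau>([] := i)) v)"
  have "tree_verts d (Suc t) - {[]} = (\<Union>c\<in>{..<d}. (#) c ` ?V)"
    unfolding tree_verts_Suc by auto
  then have "config_weight k \<theta> d (Suc t) (\<tau>([] := i)) = (\<Prod>c<d. prod ?g ((#) c ` ?V))"
    unfolding config_weight_def by (auto intro: prod.UNION_disjoint simp: finite_tree_verts)
  also have "\<dots> = (\<Prod>c<d. \<Prod>w\<in>?V. ?g (c # w))"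
    by (rule prod.cong[OF refl], subst prod.reindex) (auto simp: inj_on_def simp del: fun_upd_apply)
  also have "\<dots> = (\<Prod>c<d. ?g [c] * (\<Prod>w\<in>?V - {[]}. ?g (c # w)))"
    by (intro prod.cong refl prod.remove) (auto simp: finite_tree_verts Nil_in_tree_verts)
  also have "\<dots> = (\<Prod>c<d. trans_prob k \<theta> i (\<tau> [c]) * config_weight k \<theta> d t (\<lambda>w\<in>?V. \<tau> (c # w)))"
    unfolding config_weight_def by (intro prod.cong refl) (auto simp: butlast_in_tree_verts)
  finally show ?thesis .
qed

text \<open>The law of the revealed labels \<open>z\<close> in the subtree below the child \<open>c\<close>, given the parent
  label \<open>i\<close>: a revealed child shows its own label \<open>z []\<close>, below which the observations follow
  \<open>mu\<close> at depth \<open>t\<close>; for a hidden child one averages over its label.\<close>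
definition child_mu :: "nat \<Rightarrow> real \<Rightarrow> nat \<Rightarrow> nat \<Rightarrow> nat \<Rightarrow> nat \<Rightarrow> nat \<Rightarrow> (nat list \<Rightarrow> nat) \<Rightarrow> real" where
  "child_mu k \<theta> r d t c i z =
     (if c < r then trans_prob k \<theta> i (z []) * mu k \<theta> r d t (z []) (restrict z (revealed_verts r d t))
      else (\<Sum>b\<in>{1..k}. trans_prob k \<theta> i b * mu k \<theta> r d t b z))"

lemma sum_config_weight_subtree:
  assumes z: "z \<in> PiE (subtree_revealed r d t c) (\<lambda>_. {1..k})"
  shows "(\<Sum>y\<in>PiE (tree_verts d t) (\<lambda>_. {1..k}).
            if restrict y (subtree_revealed r d t c) = z
            then trans_prob k \<theta> i (y []) * config_weight k \<theta> d t y else 0)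
       = child_mu k \<theta> r d t c i z"
    (is "(\<Sum>y\<in>?Y. ?h y) = _")
proof -
  let ?A = "{1..k}" and ?R = "revealed_verts r d t"
  have "(\<Sum>y\<in>?Y. ?h y) = (\<Sum>y\<in>?Y. \<Sum>b\<in>?A. if y [] = b then ?h y else 0)"
    by (intro sum.cong refl) (auto simp: Nil_in_tree_verts PiE_iff)
  also have "\<dots> = (\<Sum>b\<in>?A. \<Sum>y\<in>?Y. if y [] = b then ?h y else 0)"
    by (rule sum.swap)
  also have "\<dots> = child_mu k \<theta> r d t c i z"
  proof (cases "c < r")
    case False
    then have "(\<Sum>y\<in>?Y. if y [] = b then ?h y else 0) = trans_prob k \<theta> i b * mu k \<theta> r d t b z" for b
      unfolding mu_eq_sum_config_weight sum_distrib_left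
      by (intro sum.cong refl) (auto simp: subtree_revealed_def)
    with False show ?thesis by (simp add: child_mu_def)
  next
    case True
    with z have z0: "z [] \<in> ?A" and ext: "z \<in> extensional (insert [] ?R)"
      by (auto simp: subtree_revealed_def PiE_iff)
    have eq: "restrict y (insert [] ?R) = z \<longleftrightarrow> y [] = z [] \<and> restrict y ?R = restrict z ?R" for y
    proof
      assume "y [] = z [] \<and> restrict y ?R = restrict z ?R"
      with ext show "restrict y (insert [] ?R) = z"
        by (auto simp: restrict_def fun_eq_iff extensional_def split: if_splits)
    next
      assume h: "restrict y (insert [] ?R) = z"
      show "y [] = z [] \<and> restrict y ?R = restrict z ?R"
        unfolding h[symmetric] by (auto simp: fun_eq_iff)
    qed
    have "(\<Sum>y\<in>?Y. if y [] = b then ?h y else 0) =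
          (if b = z [] then trans_prob k \<theta> i b * mu k \<theta> r d t b (restrict z ?R) else 0)" for b
      unfolding mu_eq_sum_config_weight sum_distrib_left using True
      by (cases "b = z []") (auto simp: subtree_revealed_def eq intro!: sum.cong sum.neutral)
    with True z0 show ?thesis by (simp add: child_mu_def sum.delta')
  qed
  finally show ?thesis .
qed

lemma config_weight_Suc_if_restrict:
  assumes x: "x \<in> rev_configs k r d (Suc t)"
  shows "(if restrict (\<tau>([] := i)) (revealed_verts r d (Suc t)) = x
          then config_weight k \<theta> d (Suc t) (\<tau>([] := i)) else 0)
       = (\<Prod>c<d. if restrict (\<lambda>w\<in>tree_verts d t. \<tau> (c # w)) (subtree_revealed r d t c)
                     = (\<lambda>w\<in>subtree_revealed r d t c. x (c # w))
                  then trans_prob k \<theta> i (\<tau> [c]) * config_weight k \<theta> d t (\<lambda>w\<in>tree_verts d t. \<tau> (c # w))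
                  else 0)"
proof (cases "restrict (\<tau>([] := i)) (revealed_verts r d (Suc t)) = x")
  case True
  with restrict_revealed_Suc_iff[OF x] show ?thesis
    by (auto simp: config_weight_Suc intro!: prod.cong)
next
  case False
  with restrict_revealed_Suc_iff[OF x] show ?thesis
    by (auto intro!: prod_zero[symmetric])
qed

lemma mu_Suc:
  assumes x: "x \<in> rev_configs k r d (Suc t)" and i: "i \<in> {1..k}"
  shows "mu k \<theta> r d (Suc t) i x
       = (\<Prod>c<d. child_mu k \<theta> r d t c i (\<lambda>w\<in>subtree_revealed r d t c. x (c # w)))"
proof -
  let ?A = "{1..k}" and ?V = "tree_verts d t" and ?U = "\<Union>c\<in>{..<d}. (#) c ` tree_verts d t"
  let ?R' = "revealed_verts r d (Suc t)"
  define h where "h c y = (if restrict y (subtree_revealed r d t c) = (\<lambda>w\<in>subtree_revealed r d t c. x (c # w))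
       then trans_prob k \<theta> i (y []) * config_weight k \<theta> d t y else 0)" for c y
  have "mu k \<theta> r d (Suc t) i x = (\<Sum>\<sigma>\<in>PiE (insert [] ?U) (\<lambda>_. ?A).
      if \<sigma> [] = i \<and> restrict \<sigma> ?R' = x then config_weight k \<theta> d (Suc t) \<sigma> else 0)"
    unfolding mu_eq_sum_config_weight tree_verts_Suc ..
  also have "\<dots> = (\<Sum>b\<in>?A. if b = i then (\<Sum>\<tau>\<in>PiE ?U (\<lambda>_. ?A).
      if restrict (\<tau>([] := i)) ?R' = x then config_weight k \<theta> d (Suc t) (\<tau>([] := i)) else 0) else 0)"
    by (subst sum_PiE_insert, blast, rule sum.cong[OF refl]) auto
  also have "\<dots> = (\<Sum>\<tau>\<in>PiE ?U (\<lambda>_. ?A).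
      if restrict (\<tau>([] := i)) ?R' = x then config_weight k \<theta> d (Suc t) (\<tau>([] := i)) else 0)"
    using i by (simp add: sum.delta')
  also have "\<dots> = (\<Sum>\<tau>\<in>PiE ?U (\<lambda>_. ?A). \<Prod>c<d. h c (\<lambda>w\<in>?V. \<tau> (c # w)))"
    unfolding config_weight_Suc_if_restrict[OF x] h_def
    by (intro sum.cong prod.cong refl) (simp_all add: restrict_apply' Nil_in_tree_verts)
  also have "\<dots> = (\<Prod>c<d. \<Sum>y\<in>PiE ?V (\<lambda>_. ?A). h c y)"
    by (rule sum_prod_PiE_subtrees) (auto simp: finite_tree_verts)
  also have "\<dots> = (\<Prod>c<d. child_mu k \<theta> r d t c i (\<lambda>w\<in>subtree_revealed r d t c. x (c # w)))"
    unfolding h_def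
    using restrict_subtree_in_PiE[OF x] by (intro prod.cong refl sum_config_weight_subtree) auto
  finally show ?thesis .
qed

locale broadcast_tree =
  fixes k :: nat and \<theta> :: real and r d :: nat
  assumes k_pos: "0 < k" and \<theta>_pos: "0 < \<theta>" and \<theta>_less_1: "\<theta> < 1"
begin

abbreviation "A \<equiv> {1..k}"
abbreviation "P \<equiv> trans_prob k \<theta>"
abbreviation "m \<equiv> mu k \<theta> r d"
abbreviation "RC \<equiv> rev_configs k r d"
abbreviation "SC t c \<equiv> PiE (subtree_revealed r d t c) (\<lambda>_. A)"
abbreviation "F \<equiv> child_mu k \<theta> r d"

lemma trans_prob_pos: "0 < P a b"
  using k_pos \<theta>_pos \<theta>_less_1 by (auto simp: trans_prob_def intro!: add_pos_nonneg)

lemma sum_trans_prob: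
  assumes "a \<in> A"
  shows "sum (P a) A = 1"
proof -
  have "sum (P a) A = (\<Sum>b\<in>A. (1 - \<theta>) / real k + (if b = a then \<theta> else 0))"
    by (intro sum.cong refl) (auto simp: trans_prob_def)
  also have "\<dots> = 1"
    using assms k_pos by (simp add: sum.distrib sum.delta')
  finally show ?thesis .
qed

lemma trans_prob_diff: "P a b - P j b = \<theta> * (of_bool (b = a) - of_bool (b = j))"
  by (auto simp: trans_prob_def)

lemma mu_0: "i \<in> A \<Longrightarrow> m 0 i x = of_bool (x = (\<lambda>_. undefined))"
  unfolding mu_eq_sum_config_weight config_weight_def tree_verts_0 revealed_verts_0
  by (simp add: sum_PiE_insert[where S = "{}", simplified] sum.delta' conj_commute)

lemma child_mu_pos:
  assumes pos: "\<And>b x. b \<in> A \<Longrightarrow> x \<in> RC t \<Longrightarrow> 0 < m t b x" and z: "z \<in> SC t c" and i: "i \<in> A"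
  shows "0 < F t c i z"
proof (cases "c < r")
  case True
  with z have "z [] \<in> A" "restrict z (revealed_verts r d t) \<in> RC t"
    by (auto simp: subtree_revealed_def rev_configs_def PiE_iff)
  with True show ?thesis by (simp add: child_mu_def pos trans_prob_pos)
next
  case False
  with z have "z \<in> RC t" by (simp add: subtree_revealed_def rev_configs_def)
  with False k_pos show ?thesis
    by (auto simp: child_mu_def pos trans_prob_pos intro!: sum_pos)
qed

lemma sum_child_mu:
  assumes sum1: "\<And>b. b \<in> A \<Longrightarrow> sum (m t b) (RC t) = 1" and i: "i \<in> A"
  shows "sum (F t c i) (SC t c) = 1"
proof (cases "c < r")
  case True
  then have "sum (F t c i) (SC t c) = (\<Sum>z\<in>PiE (insert [] (revealed_verts r d t)) (\<lambda>_. A).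
      (\<lambda>b \<tau>. P i b * m t b \<tau>) (z []) (restrict z (revealed_verts r d t)))"
    by (simp add: child_mu_def subtree_revealed_def)
  also have "\<dots> = (\<Sum>b\<in>A. \<Sum>\<tau>\<in>RC t. P i b * m t b \<tau>)"
    unfolding rev_configs_def by (rule sum_PiE_insert_restrict[OF Nil_notin_revealed_verts])
  finally show ?thesis using sum1 sum_trans_prob[OF i] by (simp add: sum_distrib_left[symmetric])
next
  case False
  then have "sum (F t c i) (SC t c) = (\<Sum>b\<in>A. P i b * sum (m t b) (RC t))"
    by (simp add: child_mu_def subtree_revealed_def rev_configs_def sum_distrib_left)
      (rule sum.swap)
  with sum1 sum_trans_prob[OF i] show ?thesis by simp
qed

lemma mu_pos_sum1: "i \<in> A \<Longrightarrow> (\<forall>x\<in>RC t. 0 < m t i x) \<and> sum (m t i) (RC t) = 1"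
proof (induction t arbitrary: i)
  case 0
  then show ?case by (simp add: rev_configs_0 mu_0)
next
  case (Suc t)
  have "0 < m (Suc t) i x" if x: "x \<in> RC (Suc t)" for x
    unfolding mu_Suc[OF x Suc.prems]
  proof (rule prod_pos)
    fix c assume "c \<in> {..<d}"
    with x Suc show "0 < F t c i (\<lambda>w\<in>subtree_revealed r d t c. x (c # w))"
      by (intro child_mu_pos[OF _ restrict_subtree_in_PiE]) auto
  qed
  moreover have "sum (m (Suc t) i) (RC (Suc t))
      = (\<Sum>x\<in>RC (Suc t). \<Prod>c<d. F t c i (\<lambda>w\<in>subtree_revealed r d t c. x (c # w)))"
    using Suc.prems by (intro sum.cong refl mu_Suc)
  moreover have "\<dots> = (\<Prod>c<d. sum (F t c i) (SC t c))"
    unfolding rev_configs_Suc by (rule sum_prod_PiE_subtrees) (auto simp: finite_subtree_revealed)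
  moreover have "sum (F t c i) (SC t c) = 1" for c
    using Suc by (intro sum_child_mu) auto
  ultimately show ?case by simp
qed

lemma mu_pos: "i \<in> A \<Longrightarrow> x \<in> RC t \<Longrightarrow> 0 < m t i x"
  using mu_pos_sum1 by blast

lemma sum_mu: "i \<in> A \<Longrightarrow> sum (m t i) (RC t) = 1"
  using mu_pos_sum1 by blast

lemma chi2_mu_Suc:
  assumes i: "i \<in> A" and j: "j \<in> A"
  shows "1 + chi2 (RC (Suc t)) (m (Suc t) i) (m (Suc t) j)
       = (\<Prod>c<d. 1 + chi2 (SC t c) (F t c i) (F t c j))"
proof -
  let ?z = "\<lambda>x c. \<lambda>w\<in>subtree_revealed r d t c. x (c # w)"
  have "1 + chi2 (RC (Suc t)) (m (Suc t) i) (m (Suc t) j)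
      = (\<Sum>x\<in>RC (Suc t). \<Prod>c<d. (F t c i (?z x c))^2 / F t c j (?z x c))"
    unfolding chi2_def using i j
    by (simp add: mu_Suc prod_dividef prod_power_distrib cong: sum.cong)
  also have "\<dots> = (\<Prod>c<d. \<Sum>z\<in>SC t c. (F t c i z)^2 / F t c j z)"
    unfolding rev_configs_Suc by (rule sum_prod_PiE_subtrees) (auto simp: finite_subtree_revealed)
  finally show ?thesis by (simp add: chi2_def)
qed

text \<open>The \<open>\<chi>\<^sup>2\<close> distance between two distinct rows of the transition matrix.\<close>
definition trans_chi2 :: real where
  "trans_chi2 = \<theta>^2 * (1 / (\<theta> + (1 - \<theta>) / real k) + 1 / ((1 - \<theta>) / real k))"

lemma trans_chi2_nonneg: "0 \<le> trans_chi2"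
  using \<theta>_pos \<theta>_less_1 by (simp add: trans_chi2_def)

lemma trans_chi2_eq: "trans_chi2 = real k * \<theta>^2 * (1 / (1 - \<theta>) + 1 / (real k * \<theta> + 1 - \<theta>))"
proof -
  have "0 < real k * \<theta> + (1 - \<theta>)" using k_pos \<theta>_pos \<theta>_less_1 by (simp add: add_pos_pos)
  then show ?thesis using k_pos \<theta>_less_1 by (simp add: trans_chi2_def field_simps)
qed

lemma chi2_trans_prob_le:
  assumes i: "i \<in> A" and j: "j \<in> A"
  shows "chi2 A (P i) (P j) \<le> trans_chi2"
proof -
  have "chi2 A (P i) (P j) = (\<Sum>b\<in>A. (P i b - P j b)^2 / P j b)"
    using trans_prob_pos sum_trans_prob i j by (intro chi2_eq_sum_sq_diff) (auto simp: less_imp_neq[symmetric])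
  also have "\<dots> = of_bool (i \<noteq> j) * (\<theta>^2 / P j i + \<theta>^2 / P j j)"
  proof (cases "i = j")
    case False
    then have "(\<Sum>b\<in>A. (P i b - P j b)^2 / P j b)
        = (\<Sum>b\<in>A. (if b = i then \<theta>^2 / P j i else 0) + (if b = j then \<theta>^2 / P j j else 0))"
      by (intro sum.cong refl) (auto simp: trans_prob_diff)
    with False i j show ?thesis by (simp add: sum.distrib)
  qed simp
  also have "\<dots> \<le> trans_chi2"
    using trans_chi2_nonneg by (auto simp: trans_chi2_def trans_prob_def field_simps)
  finally show ?thesis .
qed

lemma chi2_child_revealed:
  assumes c: "c < r" and i: "i \<in> A" and j: "j \<in> A"
  shows "chi2 (SC t c) (F t c i) (F t c j) = chi2 A (P i) (P j)"
proof -
  let ?R = "revealed_verts r d t"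
  have "(\<Sum>z\<in>SC t c. (F t c i z)^2 / F t c j z)
      = (\<Sum>z\<in>PiE (insert [] ?R) (\<lambda>_. A).
           (\<lambda>b \<tau>. (P i b * m t b \<tau>)^2 / (P j b * m t b \<tau>)) (z []) (restrict z ?R))"
    using c by (simp add: child_mu_def subtree_revealed_def)
  also have "\<dots> = (\<Sum>b\<in>A. \<Sum>\<tau>\<in>RC t. (P i b * m t b \<tau>)^2 / (P j b * m t b \<tau>))"
    unfolding rev_configs_def by (rule sum_PiE_insert_restrict[OF Nil_notin_revealed_verts])
  also have "\<dots> = (\<Sum>b\<in>A. (P i b)^2 / P j b * sum (m t b) (RC t))"
    unfolding sum_distrib_left
    using mu_pos trans_prob_pos[of j]
    by (intro sum.cong refl) (simp add: field_simps power2_eq_square less_imp_neq[symmetric])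
  also have "\<dots> = (\<Sum>b\<in>A. (P i b)^2 / P j b)"
    using sum_mu by simp
  finally show ?thesis by (simp add: chi2_def)
qed

text \<open>Through a hidden child one observes the mixture \<open>\<Sum>\<^sub>b P a b \<cdot> m t b\<close>; mixing with the rows
  \<open>P i\<close> and \<open>P j\<close> shrinks the difference of two such laws by the factor \<open>\<theta>\<close>.\<close>
lemma chi2_child_hidden_le:
  assumes c: "\<not> c < r" and i: "i \<in> A" and j: "j \<in> A"
    and C: "\<And>a b. a \<in> A \<Longrightarrow> b \<in> A \<Longrightarrow> chi2 (RC t) (m t a) (m t b) \<le> C"
  shows "chi2 (SC t c) (F t c i) (F t c j) \<le> 4 * \<theta>^2 * C"
proof -
  define H where "H a z = (\<Sum>b\<in>A. P a b * m t b z)" for a z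
  have SC: "SC t c = RC t" and F: "F t c a = H a" for a
    using c by (simp_all add: subtree_revealed_def rev_configs_def child_mu_def H_def fun_eq_iff)
  have H_pos: "0 < H a z" if "z \<in> RC t" for a z
    unfolding H_def using that mu_pos trans_prob_pos k_pos by (auto intro!: sum_pos)
  have sum_H: "sum (H a) (RC t) = 1" if "a \<in> A" for a
    unfolding H_def using sum_mu sum_trans_prob[OF that]
    by (subst sum.swap) (simp add: sum_distrib_left[symmetric])
  have H_diff: "H i z - H j z = \<theta> * (m t i z - m t j z)" for z
  proof -
    have "H i z - H j z = (\<Sum>b\<in>A. (P i b - P j b) * m t b z)"
      unfolding H_def by (simp add: sum_subtractf left_diff_distrib)
    also have "\<dots> = (\<Sum>b\<in>A. (if b = i then \<theta> * m t i z else 0) - (if b = j then \<theta> * m t j z else 0))"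
      by (intro sum.cong refl) (auto simp: trans_prob_diff)
    finally show ?thesis
      using i j by (simp add: sum_subtractf sum.delta' right_diff_distrib)
  qed
  have "chi2 (SC t c) (F t c i) (F t c j) = (\<Sum>z\<in>RC t. (H i z - H j z)^2 / H j z)"
    unfolding SC F using H_pos sum_H i j
    by (intro chi2_eq_sum_sq_diff) (auto simp: less_imp_neq[symmetric])
  also have "\<dots> = \<theta>^2 * (\<Sum>z\<in>RC t. (m t i z - m t j z)^2 / H j z)"
    by (simp add: H_diff power_mult_distrib sum_distrib_left)
  also have "\<dots> \<le> \<theta>^2 * (2 * (\<Sum>b\<in>A. P j b * (chi2 (RC t) (m t i) (m t b) + chi2 (RC t) (m t j) (m t b))))"
    unfolding H_def using k_pos sum_trans_prob[OF j] trans_prob_pos mu_pos sum_mu i j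
    by (intro mult_left_mono sum_sq_diff_div_mixture_le) (auto intro: less_imp_le)
  also have "\<dots> \<le> \<theta>^2 * (2 * (\<Sum>b\<in>A. P j b * (2 * C)))"
  proof (intro mult_left_mono sum_mono)
    fix b assume "b \<in> A"
    with C i j show "chi2 (RC t) (m t i) (m t b) + chi2 (RC t) (m t j) (m t b) \<le> 2 * C"
      by (smt (verit))
    show "0 \<le> P j b" using trans_prob_pos[of j b] by simp
  qed simp_all
  also have "\<dots> = 4 * \<theta>^2 * C"
    using sum_trans_prob[OF j] by (simp add: sum_distrib_right[symmetric])
  finally show ?thesis .
qed

lemma chi2_mu_Suc_le:
  assumes rd: "r \<le> d" and i: "i \<in> A" and j: "j \<in> A"
    and C: "\<And>a b. a \<in> A \<Longrightarrow> b \<in> A \<Longrightarrow> chi2 (RC t) (m t a) (m t b) \<le> C"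
  shows "1 + chi2 (RC (Suc t)) (m (Suc t) i) (m (Suc t) j) \<le> (1 + trans_chi2)^r * (1 + 4 * \<theta>^2 * C)^(d - r)"
proof -
  have "1 + chi2 (RC (Suc t)) (m (Suc t) i) (m (Suc t) j)
      \<le> (\<Prod>c<d. if c < r then 1 + trans_chi2 else 1 + 4 * \<theta>^2 * C)"
    unfolding chi2_mu_Suc[OF i j]
  proof (intro prod_mono conjI)
    fix c
    show "0 \<le> 1 + chi2 (SC t c) (F t c i) (F t c j)"
      using i j
      by (intro add_nonneg_nonneg zero_le_one chi2_nonneg child_mu_pos[OF mu_pos]
          sum_child_mu[OF sum_mu]) auto
    show "1 + chi2 (SC t c) (F t c i) (F t c j) \<le> (if c < r then 1 + trans_chi2 else 1 + 4 * \<theta>^2 * C)"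
      using chi2_child_revealed[OF _ i j] chi2_trans_prob_le[OF i j] chi2_child_hidden_le[OF _ i j C]
      by auto
  qed
  also have "\<dots> = (1 + trans_chi2)^r * (1 + 4 * \<theta>^2 * C)^(d - r)"
    by (rule prod_lessThan_if_less[OF rd])
  finally show ?thesis .
qed

lemma chi2_mu_le:
  assumes rd: "r \<le> d" and D: "1 - 4 * real (d - r) * \<theta>^2 = D" "0 < D"
    and revealed: "2 * real r * ln (1 + trans_chi2) < D^2"
    and i: "i \<in> A" and j: "j \<in> A"
  shows "chi2 (RC t) (m t i) (m t j) \<le> 2 * real r * ln (1 + trans_chi2) / D"
  using i j
proof (induction t arbitrary: i j)
  case 0
  then show ?case using trans_chi2_nonneg D by (simp add: rev_configs_0 chi2_def mu_0)
next
  case (Suc t)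
  define B where "B = 2 * real r * ln (1 + trans_chi2) / D"
  have B: "0 \<le> B" "B \<le> D"
    using D revealed trans_chi2_nonneg by (simp_all add: B_def divide_le_eq power2_eq_square)
  have "1 + chi2 (RC (Suc t)) (m (Suc t) i) (m (Suc t) j) \<le> (1 + trans_chi2)^r * (1 + 4 * \<theta>^2 * B)^(d - r)"
    using Suc by (intro chi2_mu_Suc_le[OF rd]) (auto simp: B_def)
  also have "\<dots> \<le> 1 + B"
    using D by (intro power_mult_power_le_fixed_point[OF trans_chi2_nonneg B]) (auto simp: B_def)
  finally show ?case by (simp add: B_def)
qed

lemma chi2_nonneg_mu: "i \<in> A \<Longrightarrow> j \<in> A \<Longrightarrow> 0 \<le> chi2 (RC t) (m t i) (m t j)"
  by (intro chi2_nonneg mu_pos sum_mu)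

lemma max_ln_chi2_mu_le:
  assumes "\<And>i j. i \<in> A \<Longrightarrow> j \<in> A \<Longrightarrow> chi2 (RC t) (m t i) (m t j) \<le> B"
  shows "Max ((\<lambda>(i, j). ln (1 + chi2 (RC t) (m t i) (m t j))) ` (A \<times> A)) \<le> B"
proof (intro Max.boundedI)
  fix y assume "y \<in> (\<lambda>(i, j). ln (1 + chi2 (RC t) (m t i) (m t j))) ` (A \<times> A)"
  then obtain i j where ij: "i \<in> A" "j \<in> A" and y: "y = ln (1 + chi2 (RC t) (m t i) (m t j))"
    by auto
  show "y \<le> B"
    unfolding y using chi2_nonneg_mu[OF ij] assms[OF ij]
    by (meson ln_add_one_self_le_self order_trans)
qed (use k_pos in auto)

lemma max_err_prob_ge:
  assumes chi2: "\<And>i j. i \<in> A \<Longrightarrow> j \<in> A \<Longrightarrow> chi2 (RC t) (m t i) (m t j) \<le> real k * a"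
    and \<Phi>: "\<forall>x\<in>RC t. \<Phi> x \<in> A"
  shows "1/2 * (1 - a - 1 / real k) \<le> Max (err_prob k \<theta> r d t \<Phi> ` A)"
proof -
  have "0 \<le> real k * a"
    using chi2[of 1 1] chi2_nonneg_mu[of 1 1 t] k_pos by simp
  have err: "err_prob k \<theta> r d t \<Phi> i = 1 - (\<Sum>x\<in>RC t. if \<Phi> x = i then m t i x else 0)"
    if i: "i \<in> A" for i
  proof -
    have "err_prob k \<theta> r d t \<Phi> i = (\<Sum>x\<in>RC t. m t i x - (if \<Phi> x = i then m t i x else 0))"
      unfolding err_prob_def by (intro sum.cong refl) auto
    then show ?thesis using sum_mu[OF i] by (simp add: sum_subtractf)
  qed
  have "(\<Sum>i\<in>A. \<Sum>x\<in>RC t. if \<Phi> x = i then m t i x else 0) = (\<Sum>x\<in>RC t. m t (\<Phi> x) x)"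
    using \<Phi> by (subst sum.swap) (simp add: sum.delta')
  then have "(\<Sum>i\<in>A. err_prob k \<theta> r d t \<Phi> i) = real k - (\<Sum>x\<in>RC t. m t (\<Phi> x) x)"
    by (simp add: err sum_subtractf)
  also have "\<dots> \<ge> real k - (real k + 1 + real k * a) / 2"
    using sum_estimator_le[of A 1 "RC t" \<Phi> "m t" "real k * a"] \<Phi> k_pos \<open>0 \<le> real k * a\<close> chi2 mu_pos sum_mu
    by simp
  moreover have "(\<Sum>i\<in>A. err_prob k \<theta> r d t \<Phi> i) \<le> real k * Max (err_prob k \<theta> r d t \<Phi> ` A)"
    using sum_bounded_above[of A "err_prob k \<theta> r d t \<Phi>"] by simp
  ultimately show ?thesis
    using k_pos by (simp add: field_simps)
qed

end

theorem theorem6: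
  fixes k d r t :: nat and \<theta> \<delta> :: real
  assumes k: "0 < k"
    and th: "0 < \<theta>" "\<theta> < 1"
    and d: "0 < d"
    and delta: "0 \<le> \<delta>" "\<delta> \<le> 1" "real r = \<delta> * real d"
    and h1: "\<delta> * real d > 1"
    and h2: "(1 - \<delta>) * \<theta>^2 * real d < 1/4"
    and h3: "2 * \<delta> * real d * ln (1 + \<theta>^2 * (1 / (\<theta> + (1 - \<theta>) / real k) + 1 / ((1 - \<theta>) / real k)))
               < (1 - 4 * (1 - \<delta>) * \<theta>^2 * real d)^2"
    and t: "0 < t"
  shows "Max ((\<lambda>(i, j). ln (1 + chi2 (rev_configs k r d t) (mu k \<theta> r d t i) (mu k \<theta> r d t j)))
                 ` ({1..k} \<times> {1..k}))
           \<le> 2 * \<delta> * real d * ln (1 + \<theta>^2 * (1 / (\<theta> + (1 - \<theta>) / real k) + 1 / ((1 - \<theta>) / real k)))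
               / (1 - 4 * (1 - \<delta>) * \<theta>^2 * real d)
       \<and> 2 * \<delta> * real d * ln (1 + \<theta>^2 * (1 / (\<theta> + (1 - \<theta>) / real k) + 1 / ((1 - \<theta>) / real k)))
               / (1 - 4 * (1 - \<delta>) * \<theta>^2 * real d)
           \<le> real k * (2 * \<delta> * \<theta>^2 * real d / (1 - 4 * (1 - \<delta>) * \<theta>^2 * real d))
               * (1 / (1 - \<theta>) + 1 / (real k * \<theta> + 1 - \<theta>))
       \<and> (\<forall>\<Phi>. (\<forall>x \<in> rev_configs k r d t. \<Phi> x \<in> {1..k}) \<longrightarrow>
             Max ((\<lambda>i. err_prob k \<theta> r d t \<Phi> i) ` {1..k})
               \<ge> 1/2 * (1 - 2 * \<delta> * \<theta>^2 * real d / (1 - 4 * (1 - \<delta>) * \<theta>^2 * real d)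
                          * (1 / (1 - \<theta>) + 1 / (real k * \<theta> + 1 - \<theta>)) - 1 / real k))"
proof -
  interpret broadcast_tree k \<theta> r d by unfold_locales (use k th in auto)
  define D where "D = 1 - 4 * (1 - \<delta>) * \<theta>^2 * real d"
  define B where "B = 2 * \<delta> * real d * ln (1 + trans_chi2) / D"
  define a where "a = 2 * \<delta> * \<theta>^2 * real d / D * (1 / (1 - \<theta>) + 1 / (real k * \<theta> + 1 - \<theta>))"
  have "real r \<le> real d" using delta d by (simp add: mult_le_cancel_right1)
  then have rd: "r \<le> d" by simp
  have D: "1 - 4 * real (d - r) * \<theta>^2 = D" "0 < D"
    using rd delta(3) h2 by (simp_all add: D_def of_nat_diff algebra_simps)
  have chi2_B: "chi2 (RC t) (m t i) (m t j) \<le> B" if "i \<in> A" "j \<in> A" for i j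
    using chi2_mu_le[OF rd D _ that] h3[folded trans_chi2_def D_def] delta(3) by (simp add: B_def mult.assoc)
  have "B \<le> 2 * \<delta> * real d * trans_chi2 / D"
    unfolding B_def using ln_add_one_self_le_self[OF trans_chi2_nonneg] D delta
    by (intro divide_right_mono mult_left_mono) auto
  also have "\<dots> = real k * a"
    by (simp add: a_def trans_chi2_eq mult_ac)
  finally have B_le: "B \<le> real k * a" .
  have "1/2 * (1 - a - 1 / real k) \<le> Max (err_prob k \<theta> r d t \<Phi> ` A)"
    if "\<forall>x\<in>RC t. \<Phi> x \<in> A" for \<Phi>
    using chi2_B B_le by (intro max_err_prob_ge[OF _ that]) (meson order_trans)
  then show ?thesis
    using max_ln_chi2_mu_le[OF chi2_B] B_le
    by (simp add: B_def a_def D_def trans_chi2_def mult.assoc)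
qed

end
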